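(* Let $d\ge1$, $L>0$, $V\in\mathscr V_N$, and suppose that for some $\theta_d\in[0,\infty)$ there is $\rho\in\mathscr P$, not a.e. equal to $\rho_0$, with $\mathcal F_{\theta_d}(\rho)\le\mathcal F_{\theta_d}(\rho_0)$. Then for every $\theta>\theta_d$, $\rho_0$ is not a minimizer of $\mathcal F_\theta$ over $\mathscr P$.
   Context: $\mathbb T_L^d=\mathbb R^d/(L\mathbb Z)^d$. The class $\mathscr V$ consists of measurable $V:\mathbb R^d\to\mathbb R$ with $V\in L^1(\mathbb R^d)$, $V^-\in L^\infty$, $V(x)=V(-x)$, $V(x)=0$ for $|x|>a$, $0<a<L/2$; $V$ is periodized to $\mathbb T_L^d$ and $\hat V(k)=\int_{\mathbb T_L^d}V(x)e^{-ik\cdot x}dx$ for $k\in(2\pi/L)\mathbb Z^d$. $\mathscr V_N$ is the set of $V\in\mathscr V$ with $\hat V(k)<0$ for some $k\ne0$. $\mathscr P$ = probability densities on $\mathbb T_L^d$, $\rho_0\equiv L^{-d}$. $\mathcal F_\theta(\rho)=\int\rho\log\rho\,dx+\tfrac12\theta L^d\iint V(x-y)\rho(x)\rho(y)\,dx\,dy$ ($+\infty$ if $\rho\log\rho\notin L^1$). *)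

theory Defs
  imports "HOL-Analysis.Analysis"
begin

text \<open>Torus T_L^d represented by L-periodic functions on real^'n, integrated over the
  fundamental cube [0,L)^d. The dimension d is CARD('n) (always at least 1).\<close>

definition intvecs :: "(real^'n) set" where
  "intvecs = {k. \<forall>i. k $ i \<in> \<int>}"

definition cube :: "real \<Rightarrow> (real^'n) set" where
  "cube L = {x. \<forall>i. 0 \<le> x $ i \<and> x $ i < L}"

definition periodic_on_torus :: "real \<Rightarrow> (real^'n \<Rightarrow> real) \<Rightarrow> bool" where
  "periodic_on_torus L f \<longleftrightarrow> (\<forall>x. \<forall>k\<in>intvecs. f (x + L *\<^sub>R k) = f x)"

definition classV :: "real \<Rightarrow> (real^'n \<Rightarrow> real) \<Rightarrow> bool" where
  "classV L V \<longleftrightarrow>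
     V \<in> borel_measurable lborel \<and>
     integrable lborel V \<and>
     (\<exists>C. AE x in lborel. - C \<le> V x) \<and>
     (\<forall>x. V x = V (- x)) \<and>
     (\<exists>a. 0 < a \<and> a < L / 2 \<and> (\<forall>x. norm x > a \<longrightarrow> V x = 0))"

definition Vper :: "real \<Rightarrow> (real^'n \<Rightarrow> real) \<Rightarrow> real^'n \<Rightarrow> real" where
  "Vper L V x = infsum (\<lambda>k. V (x + L *\<^sub>R k)) intvecs"

definition Vhat :: "real \<Rightarrow> (real^'n \<Rightarrow> real) \<Rightarrow> real^'n \<Rightarrow> complex" where
  "Vhat L V k = (LINT x : cube L | lborel.
        complex_of_real (Vper L V x) * exp (- (\<i> * complex_of_real (k \<bullet> x))))"

definition dual_lattice :: "real \<Rightarrow> (real^'n) set" where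
  "dual_lattice L = (\<lambda>m. (2 * pi / L) *\<^sub>R m) ` intvecs"

definition classVN :: "real \<Rightarrow> (real^'n \<Rightarrow> real) \<Rightarrow> bool" where
  "classVN L V \<longleftrightarrow> classV L V \<and>
     (\<exists>k\<in>dual_lattice L. k \<noteq> 0 \<and> Vhat L V k \<in> \<real> \<and> Re (Vhat L V k) < 0)"

definition densities :: "real \<Rightarrow> (real^'n \<Rightarrow> real) set" where
  "densities L = {\<rho>. \<rho> \<in> borel_measurable lborel \<and> periodic_on_torus L \<rho> \<and>
      (\<forall>x. 0 \<le> \<rho> x) \<and> set_integrable lborel (cube L) \<rho> \<and>
      (LINT x : cube L | lborel. \<rho> x) = 1}"

definition rho0 :: "real \<Rightarrow> real^'n \<Rightarrow> real" where
  "rho0 L = (\<lambda>x. 1 / L ^ CARD('n))"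

definition xlogx :: "real \<Rightarrow> real" where
  "xlogx t = (if t = 0 then 0 else t * ln t)"

text \<open>Interaction energy iint V(x-y) rho(x) rho(y), as an extended real
  (positive part minus negative part; the negative part is finite for V in script-V).\<close>
definition interaction :: "real \<Rightarrow> (real^'n \<Rightarrow> real) \<Rightarrow> (real^'n \<Rightarrow> real) \<Rightarrow> ereal" where
  "interaction L V \<rho> =
     (enn2ereal (\<integral>\<^sup>+ z. indicator (cube L \<times> cube L) z *
        ennreal (max (Vper L V (fst z - snd z)) 0 * \<rho> (fst z) * \<rho> (snd z)) \<partial>(lborel \<Otimes>\<^sub>M lborel))
    - enn2ereal (\<integral>\<^sup>+ z. indicator (cube L \<times> cube L) z *
        ennreal (max (- Vper L V (fst z - snd z)) 0 * \<rho> (fst z) * \<rho> (snd z)) \<partial>(lborel \<Otimes>\<^sub>M lborel)))"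

definition free_energy :: "real \<Rightarrow> (real^'n \<Rightarrow> real) \<Rightarrow> real \<Rightarrow> (real^'n \<Rightarrow> real) \<Rightarrow> ereal" where
  "free_energy L V \<theta> \<rho> =
     (if set_integrable lborel (cube L) (\<lambda>x. xlogx (\<rho> x))
      then ereal (LINT x : cube L | lborel. xlogx (\<rho> x))
           + ereal (\<theta> * L ^ CARD('n) / 2) * interaction L V \<rho>
      else \<infinity>)"

end

theory Submission imports Defs begin

(*
  The free energy is affine in the coupling: F_t(sigma) = S(sigma) + t (L^d/2) E(sigma),
  with entropy S and interaction energy E.  The proof rests on three facts.
  (1) Strict Jensen for t log t: S(rho0) < S(rho) whenever rho differs from rho0,
      via the strict tangent-line inequality for t log t.
  (2) E(rho0) is a finite real number: on differences of points of the cube the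
      periodisation of V is a finite sum of translates of V, and each translate of
      the integrable V has a finite double integral over the cube.
  (3) An elementary fact about affine functions in extended reals: if
      D(t) = (S - S0) + t (E - E0) has D(0) > 0 and D(thd) <= 0, then D(th) < 0 for th > thd.
  Applying (3) with the hypothesis gives F_th(rho) < F_th(rho0).
*)

text \<open>t log t lies strictly above its tangent at any point c > 0, except at c itself.
  This strict convexity is what makes the uniform density the unique entropy minimiser.\<close>
lemma xlogx_above_tangent_strict:
  fixes u c :: real
  assumes "c > 0" "u \<ge> 0" "u \<noteq> c"
  shows "xlogx c + (ln c + 1) * (u - c) < xlogx u"
proof (cases "u = 0")
  case True
  then show ?thesis using assms by (simp add: xlogx_def)
next
  case False
  then have "u > 0" using assms by simp
  then have "ln c - ln u < (c - u) / u"
    using ln_diff_less[of c u] assms by simp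
  then have "u * (ln c - ln u) < c - u"
    using \<open>u > 0\<close> by (simp add: field_simps)
  then show ?thesis
    using \<open>u > 0\<close> assms by (simp add: xlogx_def algebra_simps)
qed

lemma xlogx_above_tangent:
  fixes u c :: real
  assumes "c > 0" "u \<ge> 0"
  shows "xlogx c + (ln c + 1) * (u - c) \<le> xlogx u"
  using xlogx_above_tangent_strict[OF assms] by (cases "u = c") auto

section \<open>Strict Jensen inequality for the entropy\<close>

lemma entropy_constant_strictly_minimal:
  fixes M :: "'a measure" and A :: "'a set" and \<rho> :: "'a \<Rightarrow> real"
  assumes c_value: "c = 1 / measure M A"
    and A: "A \<in> sets M" "emeasure M A < \<infinity>" "measure M A > 0"
    and nonneg: "\<And>x. 0 \<le> \<rho> x"
    and mass: "set_integrable M A \<rho>" "(LINT x : A | M. \<rho> x) = 1"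
    and entropy: "set_integrable M A (\<lambda>x. xlogx (\<rho> x))"
    and not_const: "\<not> (AE x in M. x \<in> A \<longrightarrow> \<rho> x = c)"
  shows "(LINT x : A | M. xlogx c) < (LINT x : A | M. xlogx (\<rho> x))"
proof -
  have c_pos: "c > 0" using A(3) by (simp add: c_value)
  have ind_int: "integrable M (\<lambda>x. indicator A x :: real)"
    using A by (intro integrable_real_indicator) auto
  define g where "g x = indicator A x * (xlogx (\<rho> x) - xlogx c - (ln c + 1) * (\<rho> x - c))" for x
  have g_expand: "g x = indicator A x * xlogx (\<rho> x) - xlogx c * indicator A x
      - (ln c + 1) * (indicator A x * \<rho> x - c * indicator A x)" for x
    by (simp add: g_def indicator_def algebra_simps)
  have g_int: "integrable M g"
    unfolding g_expand using entropy mass(1) ind_int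
    by (intro Bochner_Integration.integrable_diff integrable_mult_right)
       (auto simp: set_integrable_def)
  have g_nonneg: "0 \<le> g x" for x
    using xlogx_above_tangent[OF c_pos nonneg[of x]] by (simp add: g_def indicator_def)
  have const_integral: "(LINT x : A | M. xlogx c) = xlogx c * measure M A"
    using A by (simp add: set_integral_const mult.commute)
  have "integral\<^sup>L M g = (LINT x : A | M. xlogx (\<rho> x)) - xlogx c * measure M A
      - (ln c + 1) * ((LINT x : A | M. \<rho> x) - c * measure M A)"
    unfolding g_expand using entropy mass(1) ind_int sets.Int_space_eq2[OF A(1)]
    by (simp add: set_integrable_def set_lebesgue_integral_def)
  also have "c * measure M A = 1" using A(3) by (simp add: c_value)
  finally have g_integral:
    "integral\<^sup>L M g = (LINT x : A | M. xlogx (\<rho> x)) - (LINT x : A | M. xlogx c)"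
    using mass(2) const_integral by simp
  have "integral\<^sup>L M g \<noteq> 0"
  proof
    assume "integral\<^sup>L M g = 0"
    then have "AE x in M. g x = 0"
      using integral_nonneg_eq_0_iff_AE[OF g_int] g_nonneg by simp
    then have "AE x in M. x \<in> A \<longrightarrow> \<rho> x = c"
      by eventually_elim
        (use xlogx_above_tangent_strict[OF c_pos nonneg] in \<open>force simp: g_def\<close>)
    with not_const show False ..
  qed
  moreover have "integral\<^sup>L M g \<ge> 0"
    using g_nonneg by (simp add: integral_nonneg_AE)
  ultimately show ?thesis using g_integral by linarith
qed

lemma cube_sets [measurable]: "cube L \<in> sets (lborel :: (real^'n) measure)"
  unfolding cube_def by measurable

text \<open>The cube [0,L)^d lies between the open and the closed box with the same corners,
  both of volume L^d.\<close>
lemma emeasure_cube: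
  assumes "L > 0"
  shows "emeasure lborel (cube L :: (real^'n) set) = ennreal (L ^ CARD('n))"
proof (rule order_antisym)
  let ?u = "(\<chi> i. L) :: real^'n"
  have volume: "(\<Prod>b\<in>Basis. (?u - 0) \<bullet> b) = L ^ CARD('n)"
  proof -
    have "(\<Prod>b\<in>Basis. (?u - 0) \<bullet> b) = (\<Prod>b\<in>(Basis :: (real^'n) set). L)"
      by (rule prod.cong) (auto simp: Basis_vec_def inner_axis)
    then show ?thesis by simp
  qed
  have ordered: "\<forall>b\<in>Basis. 0 \<bullet> b \<le> ?u \<bullet> b"
    using assms by (auto simp: Basis_vec_def inner_axis)
  have "cube L \<subseteq> cbox 0 ?u"
    by (auto simp: cube_def mem_box_cart less_imp_le)
  then show "emeasure lborel (cube L :: (real^'n) set) \<le> ennreal (L ^ CARD('n))"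
    using emeasure_mono[of "cube L" "cbox 0 ?u" lborel] volume ordered
    by (simp add: emeasure_lborel_cbox_eq)
  have "box 0 ?u \<subseteq> cube L"
    by (auto simp: cube_def mem_box_cart less_imp_le)
  then show "ennreal (L ^ CARD('n)) \<le> emeasure lborel (cube L :: (real^'n) set)"
    using emeasure_mono[of "box 0 ?u" "cube L" lborel] cube_sets[of L] volume ordered
    by (simp add: emeasure_lborel_box_eq)
qed

lemma measure_cube:
  assumes "L > 0"
  shows "measure lborel (cube L :: (real^'n) set) = L ^ CARD('n)"
  using emeasure_cube[OF assms] assms by (simp add: measure_def)

section \<open>The periodised potential on differences of points of the cube\<close>

text \<open>Integer vectors with all coordinates in [-2,2]: the only lattice translates that
  can bring a difference of two cube points into the support of V.\<close>
definition lattice_window :: "(real^'n) set" where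
  "lattice_window = {k \<in> intvecs. \<forall>i. \<bar>k $ i\<bar> \<le> 2}"

lemma finite_lattice_window: "finite (lattice_window :: (real^'n) set)"
proof -
  let ?S = "{-2, -1, 0, 1, 2 :: real}"
  have coords: "k $ i \<in> ?S" if "k \<in> lattice_window" for k :: "real^'n" and i
  proof -
    have "k $ i \<in> \<int>" using that by (simp add: lattice_window_def intvecs_def)
    then obtain m :: int where m: "k $ i = of_int m" by (elim Ints_cases)
    have "\<bar>k $ i\<bar> \<le> 2" using that by (simp add: lattice_window_def)
    then have "\<bar>m\<bar> \<le> 2" using m by linarith
    then have "m \<in> {-2, -1, 0, 1, 2}" by auto
    then show ?thesis using m by auto
  qed
  have "lattice_window \<subseteq> (\<lambda>f. \<chi> i. f i) ` (PiE (UNIV :: 'n set) (\<lambda>_. ?S))"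
  proof
    fix k :: "real^'n" assume "k \<in> lattice_window"
    then have "(\<lambda>i. k $ i) \<in> PiE UNIV (\<lambda>_. ?S)" using coords by auto
    then show "k \<in> (\<lambda>f. \<chi> i. f i) ` (PiE UNIV (\<lambda>_. ?S))"
      by (metis (no_types, lifting) image_eqI vec_lambda_eta)
  qed
  moreover have "finite (PiE (UNIV :: 'n set) (\<lambda>_. ?S))" by (intro finite_PiE) auto
  ultimately show ?thesis by (meson finite_imageI finite_subset)
qed

text \<open>If every coordinate of z is smaller than L in modulus, a translate z + L k by a lattice
  vector outside the window has a coordinate of modulus above 2L > a, so V vanishes there.\<close>
lemma potential_vanishes_outside_window:
  fixes V :: "real^'n \<Rightarrow> real" and z k :: "real^'n"
  assumes L: "L > 0" and V: "classV L V" and z: "\<And>i. \<bar>z $ i\<bar> < L"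
    and k: "k \<in> intvecs" "k \<notin> lattice_window"
  shows "V (z + L *\<^sub>R k) = 0"
proof -
  obtain a where a: "a < L / 2" "\<And>x. norm x > a \<Longrightarrow> V x = 0"
    using V unfolding classV_def by blast
  obtain i where i: "\<bar>k $ i\<bar> > 2" using k by (auto simp: lattice_window_def not_le)
  have "k $ i \<in> \<int>" using k by (simp add: intvecs_def)
  then obtain m :: int where m: "k $ i = of_int m" by (elim Ints_cases)
  then have "\<bar>m\<bar> \<ge> 3" using i by linarith
  then have "\<bar>k $ i\<bar> \<ge> 3" using m by linarith
  then have "\<bar>L * k $ i\<bar> \<ge> 3 * L" using L by (simp add: abs_mult)
  then have "\<bar>(z + L *\<^sub>R k) $ i\<bar> > a" using z[of i] a(1) by auto
  then have "norm (z + L *\<^sub>R k) > a"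
    using component_le_norm_cart[of "z + L *\<^sub>R k" i] by linarith
  then show ?thesis using a(2) by blast
qed

lemma periodisation_as_finite_sum:
  fixes V :: "real^'n \<Rightarrow> real" and z :: "real^'n"
  assumes L: "L > 0" and V: "classV L V" and z: "\<And>i. \<bar>z $ i\<bar> < L"
  shows "Vper L V z = (\<Sum>k\<in>lattice_window. V (z + L *\<^sub>R k))"
proof -
  have "Vper L V z = infsum (\<lambda>k. V (z + L *\<^sub>R k)) lattice_window"
    unfolding Vper_def
    by (rule infsum_cong_neutral)
       (auto simp: lattice_window_def intro: potential_vanishes_outside_window[OF L V z])
  also have "\<dots> = (\<Sum>k\<in>lattice_window. V (z + L *\<^sub>R k))"
    by (rule infsum_finite[OF finite_lattice_window])
  finally show ?thesis .
qed

lemma cube_difference_coordinates: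
  assumes "x \<in> cube L" "y \<in> cube L"
  shows "\<bar>(x - y) $ i\<bar> < L"
proof -
  have "0 \<le> x $ i" "x $ i < L" "0 \<le> y $ i" "y $ i < L"
    using assms by (auto simp: cube_def)
  then show ?thesis by (simp add: abs_less_iff)
qed

section \<open>Finiteness of the interaction energy of the uniform density\<close>

lemma nn_integral_lborel_reflect:
  fixes f :: "'a::euclidean_space \<Rightarrow> ennreal"
  assumes [measurable]: "f \<in> borel_measurable borel"
  shows "(\<integral>\<^sup>+ y. f (t - y) \<partial>lborel) = (\<integral>\<^sup>+ y. f y \<partial>lborel)"
proof -
  have "(lborel :: 'a measure) = distr lborel borel (\<lambda>x. t - x)"
    using lborel_affine[of "-1" t] by (simp add: density_1)
  then have "(\<integral>\<^sup>+ y. f y \<partial>lborel) = (\<integral>\<^sup>+ y. f y \<partial>distr lborel borel (\<lambda>x. t - x))"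
    by simp
  also have "\<dots> = (\<integral>\<^sup>+ y. f (t - y) \<partial>lborel)"
    by (rule nn_integral_distr) auto
  finally show ?thesis by simp
qed

text \<open>For integrable V, the kernel (x,y) \<mapsto> |V(x - y + w)| has finite integral over A \<times> A
  whenever A has finite measure: integrating in y first gives at most the L1 norm of V.\<close>
lemma difference_kernel_finite:
  fixes V :: "'a::euclidean_space \<Rightarrow> real"
  assumes V: "integrable lborel V" and A: "A \<in> sets lborel" "emeasure lborel A < \<infinity>"
  shows "(\<integral>\<^sup>+ z. indicator (A \<times> A) z * ennreal \<bar>V (fst z - snd z + w)\<bar> \<partial>(lborel \<Otimes>\<^sub>M lborel)) < \<infinity>"
proof -
  have [measurable]: "V \<in> borel_measurable borel" "A \<in> sets lborel"
    using borel_measurable_integrable[OF V] A(1) by simp_all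
  have kernel_measurable: "(\<lambda>z. indicator (A \<times> A) z * ennreal \<bar>V (fst z - snd z + w)\<bar>)
      \<in> borel_measurable (lborel \<Otimes>\<^sub>M lborel)"
    by measurable
  define N where "N = (\<integral>\<^sup>+ y. ennreal \<bar>V y\<bar> \<partial>lborel)"
  have N_finite: "N < \<infinity>" using V unfolding N_def integrable_iff_bounded by simp
  have "(\<integral>\<^sup>+ z. indicator (A \<times> A) z * ennreal \<bar>V (fst z - snd z + w)\<bar> \<partial>(lborel \<Otimes>\<^sub>M lborel))
      = (\<integral>\<^sup>+ x. \<integral>\<^sup>+ y. indicator (A \<times> A) (x, y) * ennreal \<bar>V (x - y + w)\<bar> \<partial>lborel \<partial>lborel)"
    using lborel.nn_integral_fst[OF kernel_measurable] by simp
  also have "\<dots> \<le> (\<integral>\<^sup>+ x. indicator A x * N \<partial>lborel)"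
  proof (rule nn_integral_mono)
    fix x :: 'a
    have "(\<integral>\<^sup>+ y. indicator (A \<times> A) (x, y) * ennreal \<bar>V (x - y + w)\<bar> \<partial>lborel)
        \<le> (\<integral>\<^sup>+ y. indicator A x * ennreal \<bar>V ((x + w) - y)\<bar> \<partial>lborel)"
      by (rule nn_integral_mono) (auto simp: indicator_def algebra_simps)
    also have "\<dots> = indicator A x * N"
      using nn_integral_lborel_reflect[of "\<lambda>y. ennreal \<bar>V y\<bar>" "x + w"]
      by (simp add: nn_integral_cmult N_def)
    finally show "(\<integral>\<^sup>+ y. indicator (A \<times> A) (x, y) * ennreal \<bar>V (x - y + w)\<bar> \<partial>lborel)
        \<le> indicator A x * N" .
  qed
  also have "\<dots> = N * emeasure lborel A"
    using nn_integral_cmult_indicator[OF A(1), of N] by (simp add: mult.commute)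
  also have "\<dots> < \<infinity>"
    using N_finite A(2) by (simp add: ennreal_mult_less_top)
  finally show ?thesis .
qed

text \<open>The same holds for the periodised potential on the cube, since there it is a finite
  sum of translates of V.\<close>
lemma periodised_kernel_finite:
  fixes V :: "real^'n \<Rightarrow> real"
  assumes L: "L > 0" and V: "classV L V" and C: "C \<ge> 0"
  shows "(\<integral>\<^sup>+ z. indicator (cube L \<times> cube L) z * ennreal (C * \<bar>Vper L V (fst z - snd z)\<bar>)
      \<partial>(lborel \<Otimes>\<^sub>M lborel)) < \<infinity>"
proof -
  have V_int: "integrable lborel V" using V by (simp add: classV_def)
  have [measurable]: "V \<in> borel_measurable borel"
    using borel_measurable_integrable[OF V_int] by simp
  define T where "T k z = ennreal C * (indicator (cube L \<times> cube L) z
      * ennreal \<bar>V (fst z - snd z + L *\<^sub>R k)\<bar>)" for k :: "real^'n" and z :: "(real^'n) \<times> (real^'n)"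
  have "(\<integral>\<^sup>+ z. indicator (cube L \<times> cube L) z * ennreal (C * \<bar>Vper L V (fst z - snd z)\<bar>)
      \<partial>(lborel \<Otimes>\<^sub>M lborel)) \<le> (\<integral>\<^sup>+ z. (\<Sum>k\<in>lattice_window. T k z) \<partial>(lborel \<Otimes>\<^sub>M lborel))"
  proof (rule nn_integral_mono)
    fix z :: "(real^'n) \<times> (real^'n)"
    show "indicator (cube L \<times> cube L) z * ennreal (C * \<bar>Vper L V (fst z - snd z)\<bar>)
        \<le> (\<Sum>k\<in>lattice_window. T k z)"
    proof (cases "z \<in> cube L \<times> cube L")
      case True
      then have "\<bar>Vper L V (fst z - snd z)\<bar> \<le> (\<Sum>k\<in>lattice_window. \<bar>V (fst z - snd z + L *\<^sub>R k)\<bar>)"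
        using periodisation_as_finite_sum[OF L V cube_difference_coordinates]
        by (auto simp: mem_Times_iff)
      then have "ennreal (C * \<bar>Vper L V (fst z - snd z)\<bar>)
          \<le> ennreal (\<Sum>k\<in>lattice_window. C * \<bar>V (fst z - snd z + L *\<^sub>R k)\<bar>)"
        using C by (intro ennreal_leI) (simp add: sum_distrib_left[symmetric] mult_left_mono)
      also have "\<dots> = (\<Sum>k\<in>lattice_window. T k z)"
        using True C by (simp add: T_def sum_ennreal[symmetric] ennreal_mult)
      finally show ?thesis using True by simp
    qed simp
  qed
  also have "\<dots> = (\<Sum>k\<in>lattice_window. \<integral>\<^sup>+ z. T k z \<partial>(lborel \<Otimes>\<^sub>M lborel))"
    by (rule nn_integral_sum) (simp add: T_def)
  also have "\<dots> < \<infinity>"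
  proof -
    have "(\<integral>\<^sup>+ z. T k z \<partial>(lborel \<Otimes>\<^sub>M lborel)) < \<infinity>" for k
      using difference_kernel_finite[OF V_int cube_sets, of L "L *\<^sub>R k"] emeasure_cube[OF L, where 'n='n]
      by (simp add: T_def nn_integral_cmult ennreal_mult_less_top)
    then show ?thesis using finite_lattice_window[where 'n='n] by simp
  qed
  finally show ?thesis .
qed

lemma interaction_uniform_finite:
  fixes V :: "real^'n \<Rightarrow> real"
  assumes L: "L > 0" and V: "classV L V"
  obtains e where "interaction L V (rho0 L) = ereal e"
proof -
  define c :: real where "c = 1 / L ^ CARD('n)"
  have c_nonneg: "c \<ge> 0" using L by (simp add: c_def)
  have uniform: "rho0 L x = c" for x :: "real^'n" by (simp add: rho0_def c_def)
  text \<open>The positive part is obtained for h t = max t 0, the negative one for h t = max (-t) 0.\<close>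
  define part where "part h = (\<integral>\<^sup>+ z. indicator (cube L \<times> cube L) z *
      ennreal (h (Vper L V (fst z - snd z)) * rho0 L (fst z) * rho0 L (snd z)) \<partial>(lborel \<Otimes>\<^sub>M lborel))"
    for h :: "real \<Rightarrow> real"
  have part_finite: "part h < \<infinity>" if h: "\<And>t. h t \<le> \<bar>t\<bar>" for h
  proof -
    have "part h \<le> (\<integral>\<^sup>+ z. indicator (cube L \<times> cube L) z * ennreal (c * c * \<bar>Vper L V (fst z - snd z)\<bar>)
        \<partial>(lborel \<Otimes>\<^sub>M lborel))"
      unfolding part_def
    proof (rule nn_integral_mono)
      fix z :: "(real^'n) \<times> (real^'n)"
      have "c * c * h (Vper L V (fst z - snd z)) \<le> c * c * \<bar>Vper L V (fst z - snd z)\<bar>"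
        using h c_nonneg by (simp add: mult_left_mono)
      then have "h (Vper L V (fst z - snd z)) * c * c \<le> c * c * \<bar>Vper L V (fst z - snd z)\<bar>"
        by (simp add: ac_simps)
      then show "indicator (cube L \<times> cube L) z *
          ennreal (h (Vper L V (fst z - snd z)) * rho0 L (fst z) * rho0 L (snd z))
        \<le> indicator (cube L \<times> cube L) z * ennreal (c * c * \<bar>Vper L V (fst z - snd z)\<bar>)"
        unfolding uniform by (rule mult_left_mono[OF ennreal_leI]) simp_all
    qed
    also have "\<dots> < \<infinity>"
      using c_nonneg by (intro periodised_kernel_finite[OF L V]) simp
    finally show ?thesis .
  qed
  obtain p q where "part (\<lambda>t. max t 0) = ennreal p" "part (\<lambda>t. max (- t) 0) = ennreal q"
    "p \<ge> 0" "q \<ge> 0"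
    using part_finite[of "\<lambda>t. max t 0"] part_finite[of "\<lambda>t. max (- t) 0"]
    by (metis abs_ge_self abs_ge_minus_self max.bounded_iff abs_ge_zero less_top_ennreal infinity_ennreal_def)
  moreover have "interaction L V (rho0 L)
      = enn2ereal (part (\<lambda>t. max t 0)) - enn2ereal (part (\<lambda>t. max (- t) 0))"
    by (simp add: interaction_def part_def)
  ultimately have "interaction L V (rho0 L) = ereal (p - q)" by simp
  then show ?thesis by (rule that)
qed

lemma free_energy_uniform:
  fixes V :: "real^'n \<Rightarrow> real"
  assumes L: "L > 0" and e: "interaction L V (rho0 L) = ereal e"
  shows "free_energy L V t (rho0 L)
    = ereal ((LINT x : cube L | lborel. xlogx (rho0 L (x :: real^'n))) + t * L ^ CARD('n) / 2 * e)"
proof -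
  have "set_integrable lborel (cube L) (\<lambda>x::real^'n. xlogx (rho0 L x))"
    using emeasure_cube[OF L, where 'n='n] cube_sets[of L, where 'n='n]
    by (simp add: rho0_def set_integrable_def)
  then show ?thesis by (simp add: free_energy_def e)
qed

lemma entropy_uniform_strictly_smaller:
  fixes \<rho> :: "real^'n \<Rightarrow> real"
  assumes L: "L > 0" and \<rho>: "\<rho> \<in> densities L"
    and not_uniform: "\<not> (AE x in lborel. x \<in> cube L \<longrightarrow> \<rho> x = rho0 L x)"
    and entropy: "set_integrable lborel (cube L) (\<lambda>x. xlogx (\<rho> x))"
  shows "(LINT x : cube L | lborel. xlogx (rho0 L (x :: real^'n)))
    < (LINT x : cube L | lborel. xlogx (\<rho> x))"
proof -
  have volume: "measure lborel (cube L :: (real^'n) set) = L ^ CARD('n)"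
    by (rule measure_cube[OF L])
  have uniform: "rho0 L x = 1 / measure lborel (cube L :: (real^'n) set)" for x :: "real^'n"
    by (simp add: volume rho0_def)
  have mass: "set_integrable lborel (cube L) \<rho>" "(LINT x : cube L | lborel. \<rho> x) = 1"
    and nonneg: "\<And>x. 0 \<le> \<rho> x"
    using \<rho> by (simp_all add: densities_def)
  have not_const: "\<not> (AE x in lborel. x \<in> cube L \<longrightarrow> \<rho> x = 1 / measure lborel (cube L :: (real^'n) set))"
    using not_uniform by (simp only: uniform not_False_eq_True)
  have "measure lborel (cube L :: (real^'n) set) > 0"
    using L by (simp add: volume)
  from entropy_constant_strictly_minimal[OF refl cube_sets _ this nonneg mass entropy not_const]
  show ?thesis
    using emeasure_cube[OF L, where 'n='n] by (simp only: uniform) simp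
qed

text \<open>E may be infinite.\<close>
lemma affine_ereal_sign_change:
  fixes S S0 E0 \<alpha> \<beta> :: real and E :: ereal
  assumes S: "S0 < S" and \<alpha>: "0 \<le> \<alpha>" "\<alpha> < \<beta>"
    and at_\<alpha>: "ereal S + ereal \<alpha> * E \<le> ereal (S0 + \<alpha> * E0)"
  shows "ereal S + ereal \<beta> * E < ereal (S0 + \<beta> * E0)"
proof (cases E)
  case (real r)
  then have "S + \<alpha> * r \<le> S0 + \<alpha> * E0" using at_\<alpha> by simp
  then have "0 < \<alpha> * (E0 - r)" using S by (simp add: algebra_simps)
  then have "r < E0" using \<alpha>(1) by (simp add: zero_less_mult_iff)
  then have "\<alpha> * (E0 - r) < \<beta> * (E0 - r)" using \<alpha>(2) by simp
  with \<open>S + \<alpha> * r \<le> S0 + \<alpha> * E0\<close> show ?thesis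
    using real by (simp add: algebra_simps)
next
  case PInf
  then show ?thesis using at_\<alpha> S \<alpha> by (cases "\<alpha> = 0") auto
next
  case MInf
  then show ?thesis using \<alpha> by simp
qed

theorem proposition2p5:
  fixes V :: "real^'n \<Rightarrow> real" and L \<theta>d :: real
  assumes "L > 0"
    and "classVN L V"
    and "\<theta>d \<ge> 0"
    and "\<rho> \<in> densities L"
    and "\<not> (AE x in lborel. x \<in> cube L \<longrightarrow> \<rho> x = rho0 L x)"
    and "free_energy L V \<theta>d \<rho> \<le> free_energy L V \<theta>d (rho0 L)"
  shows "\<forall>\<theta>>\<theta>d. \<not> (\<forall>\<sigma>\<in>densities L. free_energy L V \<theta> (rho0 L) \<le> free_energy L V \<theta> \<sigma>)"
proof (intro allI impI notI)
  fix \<theta> assume "\<theta> > \<theta>d"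
    and minimiser: "\<forall>\<sigma>\<in>densities L. free_energy L V \<theta> (rho0 L) \<le> free_energy L V \<theta> \<sigma>"
  have V: "classV L V" using assms(2) by (simp add: classVN_def)
  obtain e where "interaction L V (rho0 L) = ereal e"
    using interaction_uniform_finite[OF assms(1) V] .
  note F_uniform = free_energy_uniform[OF assms(1) this]
  text \<open>A competitor below the finite value F_thd(rho0) must have finite entropy.\<close>
  have entropy: "set_integrable lborel (cube L) (\<lambda>x. xlogx (\<rho> x))"
  proof (rule ccontr)
    assume "\<not> ?thesis"
    then have "free_energy L V \<theta>d \<rho> = \<infinity>" by (simp add: free_energy_def)
    with assms(6) show False by (simp add: F_uniform)
  qed
  then have F_competitor: "free_energy L V t \<rho> = ereal (LINT x : cube L | lborel. xlogx (\<rho> x))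
      + ereal (t * L ^ CARD('n) / 2) * interaction L V \<rho>" for t
    by (simp add: free_energy_def)
  have "free_energy L V \<theta> \<rho> < free_energy L V \<theta> (rho0 L)"
    unfolding F_competitor F_uniform
  proof (rule affine_ereal_sign_change)
    show "(LINT x : cube L | lborel. xlogx (rho0 L (x :: real^'n))) < (LINT x : cube L | lborel. xlogx (\<rho> x))"
      by (rule entropy_uniform_strictly_smaller[OF assms(1,4,5) entropy])
    show "ereal (LINT x : cube L | lborel. xlogx (\<rho> x)) + ereal (\<theta>d * L ^ CARD('n) / 2) * interaction L V \<rho>
        \<le> ereal ((LINT x : cube L | lborel. xlogx (rho0 L (x :: real^'n))) + \<theta>d * L ^ CARD('n) / 2 * e)"
      using assms(6) by (simp only: F_competitor F_uniform)
    show "0 \<le> \<theta>d * L ^ CARD('n) / 2" using assms(1,3) by simp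
    show "\<theta>d * L ^ CARD('n) / 2 < \<theta> * L ^ CARD('n) / 2"
      using assms(1) \<open>\<theta> > \<theta>d\<close> by (simp add: divide_strict_right_mono)
  qed
  then show False using minimiser assms(4) by (meson leD)
qed

end
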